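(* Let $(x_n)_{n\in\mathbb N}$ be a block sequence in $J$, let $0<\epsilon<1$ and $\alpha>0$. Assume $I_\infty^*(x_n)=0$ and $\big|\|x_n\|-\alpha\big|<\alpha\epsilon$ for all $n$. Then for every finitely supported sequence of reals $(\lambda_n)$, $(1-\epsilon)\alpha\big(\sum_n\lambda_n^2\big)^{1/2}\le\big\|\sum_n\lambda_nx_n\big\|\le\sqrt2(1+\epsilon)\alpha\big(\sum_n\lambda_n^2\big)^{1/2}$. In particular $(x_n)$ is equivalent to the unit vector basis of $\ell_2$.
   Context: The James space $J$ is the space of real sequences $x=(x(n))_{n\in\mathbb N}$ with $\|x\|=\sup\big(\sum_{i=1}^m|\sum_{k\in I_i}x(k)|^2\big)^{1/2}<\infty$, the supremum taken over all $m$ and all pairwise disjoint finite intervals $I_1,\dots,I_m$ of $\mathbb N$. The unit vectors $(e_n)$ form a basis of $J$; a block sequence is a sequence of nonzero finitely supported vectors with $\max\operatorname{supp}x_n<\min\operatorname{supp}x_{n+1}$. $I_\infty^*\in J^*$ is the functional $I_\infty^*(x)=\sum_{n=1}^\infty x(n)$. *)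

theory Defs
  imports "HOL-Analysis.Analysis"
begin

definition fin_interval :: "nat set \<Rightarrow> bool" where
  "fin_interval I \<longleftrightarrow> (\<exists>a b. a \<le> b \<and> I = {a..b})"

definition interval_families :: "nat set set set" where
  "interval_families = {P. finite P \<and> (\<forall>I\<in>P. fin_interval I) \<and> pairwise disjnt P}"

definition james_norm :: "(nat \<Rightarrow> real) \<Rightarrow> real" where
  "james_norm x = (SUP P \<in> interval_families. sqrt (\<Sum>I\<in>P. (\<Sum>k\<in>I. x k)\<^sup>2))"

definition in_James :: "(nat \<Rightarrow> real) \<Rightarrow> bool" where
  "in_James x \<longleftrightarrow> bdd_above ((\<lambda>P. sqrt (\<Sum>I\<in>P. (\<Sum>k\<in>I. x k)\<^sup>2)) ` interval_families)"

definition supp :: "(nat \<Rightarrow> real) \<Rightarrow> nat set" where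
  "supp x = {k. x k \<noteq> 0}"

definition I_infty :: "(nat \<Rightarrow> real) \<Rightarrow> real" where
  "I_infty x = (\<Sum>n. x n)"

definition block_sequence :: "(nat \<Rightarrow> nat \<Rightarrow> real) \<Rightarrow> bool" where
  "block_sequence xs \<longleftrightarrow>
     (\<forall>n. xs n \<noteq> (\<lambda>_. 0) \<and> finite (supp (xs n))) \<and>
     (\<forall>n. Max (supp (xs n)) < Min (supp (xs (Suc n))))"

end

theory Submission
  imports Defs
begin

text \<open>Lower bound: for each n pick a family of intervals on which x_n has norm above (1-\<epsilon>)\<alpha>
  and cut it down to the range of x_n. The ranges are disjoint, so the union of the cut families
  is admissible, and on it \<Sum> \<lambda>_n x_n sees each x_n scaled by \<lambda>_n.
  Upper bound: as every x_n has total sum zero, an interval has nonzero x_n-sum only if one of its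
  two endpoints lies in the range of x_n, which happens for at most two n. With s_n the x_n-sum
  over an interval, Cauchy-Schwarz over these two terms gives (\<Sum> \<lambda>_n s_n)^2 \<le> 2 \<Sum> \<lambda>_n^2 s_n^2,
  and summing over the family yields \<parallel>\<Sum> \<lambda>_n x_n\<parallel>^2 \<le> 2 \<Sum> \<lambda>_n^2 \<parallel>x_n\<parallel>^2.\<close>

subsection \<open>The James norm as a supremum over interval families\<close>

definition james_sum :: "(nat \<Rightarrow> real) \<Rightarrow> nat set set \<Rightarrow> real" where
  "james_sum x P = (\<Sum>I\<in>P. (\<Sum>k\<in>I. x k)\<^sup>2)"

lemma james_norm_eq_SUP: "james_norm x = (SUP P\<in>interval_families. sqrt (james_sum x P))"
  unfolding james_norm_def james_sum_def ..

lemma in_James_iff_bdd_above: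
  "in_James x \<longleftrightarrow> bdd_above ((\<lambda>P. sqrt (james_sum x P)) ` interval_families)"
  unfolding in_James_def james_sum_def ..

lemma empty_in_interval_families: "{} \<in> interval_families"
  by (simp add: interval_families_def)

lemma interval_familiesD:
  assumes "P \<in> interval_families"
  shows "finite P" and "pairwise disjnt P" and "I \<in> P \<Longrightarrow> \<exists>a b. a \<le> b \<and> I = {a..b}"
  using assms by (auto simp: interval_families_def fin_interval_def)

lemma interval_families_memberD:
  assumes "P \<in> interval_families" "I \<in> P"
  shows "finite I" and "I \<noteq> {}"
  using interval_familiesD(3)[OF assms] by auto

lemma james_sum_cong: "(\<And>k. k \<in> \<Union>P \<Longrightarrow> x k = y k) \<Longrightarrow> james_sum x P = james_sum y P"
  unfolding james_sum_def by (intro sum.cong refl arg_cong[where f = "\<lambda>s. s\<^sup>2"]) auto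

lemma james_sum_scale: "james_sum (\<lambda>k. c * x k) P = c\<^sup>2 * james_sum x P"
proof -
  have "(\<Sum>k\<in>I. c * x k)\<^sup>2 = c\<^sup>2 * (\<Sum>k\<in>I. x k)\<^sup>2" for I
    by (simp add: power_mult_distrib flip: sum_distrib_left)
  then show ?thesis
    by (simp add: james_sum_def sum_distrib_left)
qed

lemma in_James_if_finite_supp:
  assumes "finite (supp x)"
  shows "in_James x"
  unfolding in_James_iff_bdd_above
proof (rule bdd_aboveI2)
  fix P assume P: "P \<in> interval_families"
  have "sqrt (james_sum x P) = L2_set (\<lambda>I. \<Sum>k\<in>I. x k) P"
    by (simp add: james_sum_def L2_set_def)
  also have "\<dots> \<le> (\<Sum>I\<in>P. \<bar>\<Sum>k\<in>I. x k\<bar>)"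
    by (rule L2_set_le_sum_abs)
  also have "\<dots> \<le> (\<Sum>I\<in>P. \<Sum>k\<in>I. \<bar>x k\<bar>)"
    by (intro sum_mono sum_abs)
  also have "\<dots> = (\<Sum>k\<in>\<Union>P. \<bar>x k\<bar>)"
    using interval_familiesD[OF P] interval_families_memberD[OF P]
    by (subst sum.Union_disjoint) (auto simp: pairwise_def disjnt_def)
  also have "\<dots> \<le> (\<Sum>k\<in>\<Union>P \<union> supp x. \<bar>x k\<bar>)"
    using interval_familiesD(1)[OF P] interval_families_memberD(1)[OF P] assms
    by (intro sum_mono2) auto
  also have "\<dots> = (\<Sum>k\<in>supp x. \<bar>x k\<bar>)"
    using interval_familiesD(1)[OF P] interval_families_memberD(1)[OF P] assms
    by (intro sum.mono_neutral_right) (auto simp: supp_def)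
  finally show "sqrt (james_sum x P) \<le> (\<Sum>k\<in>supp x. \<bar>x k\<bar>)" .
qed

lemma finite_supp_lin_comb:
  assumes "finite F" "\<And>n. n \<in> F \<Longrightarrow> finite (supp (xs n))"
  shows "finite (supp (\<lambda>k. \<Sum>n\<in>F. lam n * xs n k))"
proof (rule finite_subset)
  show "supp (\<lambda>k. \<Sum>n\<in>F. lam n * xs n k) \<subseteq> (\<Union>n\<in>F. supp (xs n))"
  proof
    fix k assume "k \<in> supp (\<lambda>k. \<Sum>n\<in>F. lam n * xs n k)"
    then have "(\<Sum>n\<in>F. lam n * xs n k) \<noteq> 0"
      by (simp add: supp_def)
    then obtain n where "n \<in> F" "lam n * xs n k \<noteq> 0"
      by (meson sum.neutral)
    then show "k \<in> (\<Union>n\<in>F. supp (xs n))"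
      by (auto simp: supp_def)
  qed
  show "finite (\<Union>n\<in>F. supp (xs n))"
    using assms by blast
qed

lemma sqrt_james_sum_le_james_norm:
  "in_James x \<Longrightarrow> P \<in> interval_families \<Longrightarrow> sqrt (james_sum x P) \<le> james_norm x"
  unfolding james_norm_eq_SUP in_James_iff_bdd_above by (rule cSUP_upper)

lemma james_norm_leI:
  "(\<And>P. P \<in> interval_families \<Longrightarrow> sqrt (james_sum x P) \<le> B) \<Longrightarrow> james_norm x \<le> B"
  unfolding james_norm_eq_SUP by (rule cSUP_least) (use empty_in_interval_families in auto)

lemma less_james_normE:
  assumes "in_James x" "c < james_norm x"
  obtains P where "P \<in> interval_families" "c < sqrt (james_sum x P)"
  using assms less_cSUP_iff[of interval_families "\<lambda>P. sqrt (james_sum x P)" c]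
    empty_in_interval_families
  unfolding james_norm_eq_SUP in_James_iff_bdd_above by blast

subsection \<open>Cutting and gluing families of intervals\<close>

definition restrict_family :: "nat set \<Rightarrow> nat set set \<Rightarrow> nat set set" where
  "restrict_family S P = (\<lambda>I. I \<inter> S) ` P - {{}}"

lemma restrict_family_in_interval_families:
  assumes P: "P \<in> interval_families"
  shows "restrict_family {c..d} P \<in> interval_families"
proof -
  have "fin_interval J" if J: "J \<in> restrict_family {c..d} P" for J
  proof -
    obtain I where I: "I \<in> P" "J = I \<inter> {c..d}" "J \<noteq> {}"
      using J by (auto simp: restrict_family_def)
    obtain a b where "I = {a..b}"
      using interval_familiesD(3)[OF P I(1)] by blast
    then have "J = {max a c..min b d}" "max a c \<le> min b d"
      using I by auto
    then show ?thesis
      by (auto simp: fin_interval_def)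
  qed
  moreover have "pairwise disjnt (restrict_family {c..d} P)"
    using interval_familiesD(2)[OF P]
    unfolding restrict_family_def pairwise_def disjnt_def by blast
  ultimately show ?thesis
    using interval_familiesD(1)[OF P] by (auto simp: interval_families_def restrict_family_def)
qed

lemma Union_restrict_family_subset: "\<Union>(restrict_family S P) \<subseteq> S"
  by (auto simp: restrict_family_def)

lemma james_sum_restrict_family:
  assumes P: "P \<in> interval_families" and vanish: "\<And>k. k \<notin> S \<Longrightarrow> x k = 0"
  shows "james_sum x (restrict_family S P) = james_sum x P"
proof -
  let ?g = "\<lambda>J. (\<Sum>k\<in>J. x k)\<^sup>2"
  have "james_sum x (restrict_family S P) = (\<Sum>J\<in>(\<lambda>I. I \<inter> S) ` P. ?g J)"
    unfolding james_sum_def restrict_family_def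
    by (rule sum.mono_neutral_left) (use interval_familiesD(1)[OF P] in auto)
  also have "\<dots> = (\<Sum>I\<in>P. ?g (I \<inter> S))"
  proof (rule sum.reindex_nontrivial[OF interval_familiesD(1)[OF P], unfolded o_def])
    fix I1 I2 assume "I1 \<in> P" "I2 \<in> P" "I1 \<noteq> I2" "I1 \<inter> S = I2 \<inter> S"
    then have "I1 \<inter> S = {}"
      using interval_familiesD(2)[OF P] unfolding pairwise_def disjnt_def by blast
    then show "?g (I1 \<inter> S) = 0" by simp
  qed
  also have "\<dots> = james_sum x P"
  proof -
    have "(\<Sum>k\<in>I \<inter> S. x k) = (\<Sum>k\<in>I. x k)" if "I \<in> P" for I
      using interval_families_memberD(1)[OF P that] vanish
      by (intro sum.mono_neutral_left) auto
    then show ?thesis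
      by (simp add: james_sum_def)
  qed
  finally show ?thesis .
qed

context
  fixes Q :: "nat \<Rightarrow> nat set set" and S :: "nat \<Rightarrow> nat set" and F :: "nat set"
  assumes finite_F: "finite F"
    and families: "\<And>n. n \<in> F \<Longrightarrow> Q n \<in> interval_families"
    and within: "\<And>n. n \<in> F \<Longrightarrow> \<Union>(Q n) \<subseteq> S n"
    and disjoint: "\<And>n m. n \<in> F \<Longrightarrow> m \<in> F \<Longrightarrow> n \<noteq> m \<Longrightarrow> S n \<inter> S m = {}"
begin

lemma UN_in_interval_families: "(\<Union>n\<in>F. Q n) \<in> interval_families"
proof -
  have "pairwise disjnt (\<Union>n\<in>F. Q n)"
    unfolding pairwise_def
  proof clarify
    fix n J m J' assume J: "n \<in> F" "J \<in> Q n" "m \<in> F" "J' \<in> Q m" "J \<noteq> J'"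
    show "disjnt J J'"
    proof (cases "n = m")
      case True
      then show ?thesis
        using interval_familiesD(2)[OF families[OF J(1)]] J by (auto simp: pairwise_def)
    next
      case False
      then show ?thesis
        using within[OF J(1)] within[OF J(3)] disjoint[OF J(1,3) False] J(2,4)
        by (auto simp: disjnt_def)
    qed
  qed
  moreover have "finite (\<Union>n\<in>F. Q n)"
    using finite_F families interval_familiesD(1) by blast
  moreover have "fin_interval J" if "J \<in> (\<Union>n\<in>F. Q n)" for J
    using that families by (auto simp: interval_families_def)
  ultimately show ?thesis
    by (simp add: interval_families_def)
qed

lemma james_sum_UN: "james_sum x (\<Union>n\<in>F. Q n) = (\<Sum>n\<in>F. james_sum x (Q n))"
  unfolding james_sum_def
proof (rule sum.UNION_disjoint[OF finite_F])
  show "\<forall>n\<in>F. finite (Q n)"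
    using families interval_familiesD(1) by blast
  show "\<forall>n\<in>F. \<forall>m\<in>F. n \<noteq> m \<longrightarrow> Q n \<inter> Q m = {}"
  proof (intro ballI impI equals0I)
    fix n m J assume nm: "n \<in> F" "m \<in> F" "n \<noteq> m" and J: "J \<in> Q n \<inter> Q m"
    then have "J \<subseteq> S n \<inter> S m"
      using within by blast
    then show False
      using disjoint[OF nm] interval_families_memberD(2)[OF families[OF nm(1)]] J by blast
  qed
qed

end

subsection \<open>Block sequences\<close>

definition block_span :: "(nat \<Rightarrow> nat \<Rightarrow> real) \<Rightarrow> nat \<Rightarrow> nat set" where
  "block_span xs n = {Min (supp (xs n))..Max (supp (xs n))}"

context
  fixes xs :: "nat \<Rightarrow> nat \<Rightarrow> real"
  assumes block: "block_sequence xs"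
begin

lemma block_finite_supp: "finite (supp (xs n))"
  using block by (simp add: block_sequence_def)

lemma block_supp_nonempty: "supp (xs n) \<noteq> {}"
  using block by (auto simp: block_sequence_def supp_def fun_eq_iff)

lemma supp_subset_block_span: "supp (xs n) \<subseteq> block_span xs n"
  using block_finite_supp block_supp_nonempty by (auto simp: block_span_def)

lemma block_vanishes_outside_span: "k \<notin> block_span xs n \<Longrightarrow> xs n k = 0"
  using supp_subset_block_span by (auto simp: supp_def)

lemma block_Max_less_Min:
  assumes "n < m"
  shows "Max (supp (xs n)) < Min (supp (xs m))"
proof -
  have "Suc n \<le> m" using assms by simp
  then show ?thesis
  proof (induction rule: dec_induct)
    case base
    then show ?case using block by (simp add: block_sequence_def)
  next
    case (step m)
    have "Min (supp (xs m)) \<le> Max (supp (xs m))"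
      using block_finite_supp block_supp_nonempty by simp
    moreover have "Max (supp (xs m)) < Min (supp (xs (Suc m)))"
      using block by (simp add: block_sequence_def)
    ultimately show ?case
      using step.IH by linarith
  qed
qed

lemma block_span_disjoint: "n \<noteq> m \<Longrightarrow> block_span xs n \<inter> block_span xs m = {}"
  using block_Max_less_Min[of n m] block_Max_less_Min[of m n]
  by (cases "n < m") (auto simp: block_span_def)

lemma sum_block_span: "(\<Sum>k\<in>block_span xs n. xs n k) = I_infty (xs n)"
  unfolding I_infty_def
  by (rule suminf_finite[symmetric]) (auto simp: block_span_def block_vanishes_outside_span)

lemma block_comb_on_span:
  assumes "finite F" "n \<in> F" "k \<in> block_span xs n"
  shows "(\<Sum>m\<in>F. lam m * xs m k) = lam n * xs n k"
proof -
  have "xs m k = 0" if "m \<noteq> n" for m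
    using block_span_disjoint[OF that] assms(3) block_vanishes_outside_span by blast
  then have "(\<Sum>m\<in>F. lam m * xs m k) = (\<Sum>m\<in>{n}. lam m * xs m k)"
    using assms by (intro sum.mono_neutral_right) auto
  then show ?thesis by simp
qed

text \<open>A block with total sum zero has zero sum over every interval that either misses its
  span or covers it.\<close>

lemma interval_sum_nonzero_imp_endpoint_in_span:
  assumes "I_infty (xs n) = 0" and "(\<Sum>k\<in>{a..b}. xs n k) \<noteq> 0"
  shows "a \<in> block_span xs n \<or> b \<in> block_span xs n"
proof (rule ccontr)
  assume "\<not> ?thesis"
  then have "{a..b} \<inter> block_span xs n = {} \<or> block_span xs n \<subseteq> {a..b}"
    unfolding block_span_def by fastforce
  moreover have "(\<Sum>k\<in>{a..b}. xs n k) = (\<Sum>k\<in>{a..b} \<inter> block_span xs n. xs n k)"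
    using block_vanishes_outside_span by (intro sum.mono_neutral_right) auto
  ultimately show False
    using assms sum_block_span by (auto simp: Int_absorb1)
qed

lemma nonzero_interval_sums_subset_doubleton:
  assumes "\<And>n. I_infty (xs n) = 0"
  obtains p q where "{n. (\<Sum>k\<in>{a..b}. xs n k) \<noteq> 0} \<subseteq> {p, q}"
proof -
  have at_most_one: "\<exists>p. {n. k \<in> block_span xs n} \<subseteq> {p}" for k
  proof (cases "\<exists>p. k \<in> block_span xs p")
    case True
    then obtain p where "k \<in> block_span xs p" by blast
    then show ?thesis using block_span_disjoint by blast
  qed auto
  obtain p q where "{n. a \<in> block_span xs n} \<subseteq> {p}" "{n. b \<in> block_span xs n} \<subseteq> {q}"
    using at_most_one by meson
  then show ?thesis
    using that interval_sum_nonzero_imp_endpoint_in_span[OF assms] by blast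
qed

end

lemma sum_square_le_card_nonzero_mult:
  fixes c :: "'a \<Rightarrow> real"
  assumes "finite A" "card {i\<in>A. c i \<noteq> 0} \<le> m"
  shows "(\<Sum>i\<in>A. c i)\<^sup>2 \<le> m * (\<Sum>i\<in>A. (c i)\<^sup>2)"
proof -
  let ?A = "{i\<in>A. c i \<noteq> 0}"
  have "(\<Sum>i\<in>A. c i) = (\<Sum>i\<in>?A. c i)"
    using assms(1) by (intro sum.mono_neutral_right) auto
  then have "(\<Sum>i\<in>A. c i)\<^sup>2 = (\<Sum>i\<in>?A. c i)\<^sup>2"
    by simp
  also have "\<dots> \<le> (\<Sum>i\<in>?A. (c i)\<^sup>2) * card ?A"
    by (rule sum_squared_le_sum_of_squares)
  also have "\<dots> \<le> (\<Sum>i\<in>A. (c i)\<^sup>2) * m"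
    using assms by (intro mult_mono sum_mono2) (auto simp: sum_nonneg)
  finally show ?thesis by (simp add: mult.commute)
qed

lemma james_sum_block_comb_glued_family:
  assumes block: "block_sequence xs" and F: "finite F"
    and P: "\<And>n. n \<in> F \<Longrightarrow> P n \<in> interval_families"
  obtains Q where "Q \<in> interval_families"
    and "james_sum (\<lambda>k. \<Sum>n\<in>F. lam n * xs n k) Q = (\<Sum>n\<in>F. (lam n)\<^sup>2 * james_sum (xs n) (P n))"
proof -
  define Q where "Q n = restrict_family (block_span xs n) (P n)" for n
  have Q: "Q n \<in> interval_families" if "n \<in> F" for n
    unfolding Q_def block_span_def by (rule restrict_family_in_interval_families[OF P[OF that]])
  have Q_within: "\<Union>(Q n) \<subseteq> block_span xs n" for n
    unfolding Q_def by (rule Union_restrict_family_subset)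
  have scaled: "james_sum (\<lambda>k. \<Sum>n\<in>F. lam n * xs n k) (Q n)
      = (lam n)\<^sup>2 * james_sum (xs n) (P n)" if n: "n \<in> F" for n
  proof -
    have "james_sum (\<lambda>k. \<Sum>n\<in>F. lam n * xs n k) (Q n) = james_sum (\<lambda>k. lam n * xs n k) (Q n)"
      using Q_within block_comb_on_span[OF block F n] by (intro james_sum_cong) auto
    also have "\<dots> = (lam n)\<^sup>2 * james_sum (xs n) (P n)"
      unfolding james_sum_scale Q_def
      using james_sum_restrict_family[OF P[OF n] block_vanishes_outside_span[OF block]] by simp
    finally show ?thesis .
  qed
  have "james_sum (\<lambda>k. \<Sum>n\<in>F. lam n * xs n k) (\<Union>n\<in>F. Q n)
      = (\<Sum>n\<in>F. james_sum (\<lambda>k. \<Sum>n\<in>F. lam n * xs n k) (Q n))"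
    by (rule james_sum_UN[where S = "block_span xs", OF F Q Q_within block_span_disjoint[OF block]])
  also have "\<dots> = (\<Sum>n\<in>F. (lam n)\<^sup>2 * james_sum (xs n) (P n))"
    using scaled by (rule sum.cong[OF refl])
  finally show ?thesis
    using that
      UN_in_interval_families[where S = "block_span xs", OF F Q Q_within block_span_disjoint[OF block]]
    by blast
qed

lemma james_norm_block_comb_ge:
  assumes block: "block_sequence xs" and F: "finite F" and "0 \<le> c"
    and less: "\<And>n. n \<in> F \<Longrightarrow> c < james_norm (xs n)"
  shows "c * sqrt (\<Sum>n\<in>F. (lam n)\<^sup>2) \<le> james_norm (\<lambda>k. \<Sum>n\<in>F. lam n * xs n k)"
proof -
  have "\<exists>P. P \<in> interval_families \<and> c < sqrt (james_sum (xs n) P)" if "n \<in> F" for n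
    using less_james_normE[OF in_James_if_finite_supp[OF block_finite_supp[OF block]] less[OF that]]
    by blast
  then obtain P where P: "\<And>n. n \<in> F \<Longrightarrow> P n \<in> interval_families"
    and P_large: "\<And>n. n \<in> F \<Longrightarrow> c < sqrt (james_sum (xs n) (P n))"
    by metis
  obtain Q where Q: "Q \<in> interval_families"
    and glued: "james_sum (\<lambda>k. \<Sum>n\<in>F. lam n * xs n k) Q
      = (\<Sum>n\<in>F. (lam n)\<^sup>2 * james_sum (xs n) (P n))"
    using james_sum_block_comb_glued_family[of xs F P lam, OF block F P] by blast
  have "(c * sqrt (\<Sum>n\<in>F. (lam n)\<^sup>2))\<^sup>2 = (\<Sum>n\<in>F. (lam n)\<^sup>2 * c\<^sup>2)"
    by (simp add: power_mult_distrib sum_nonneg sum_distrib_left mult.commute)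
  also have "\<dots> \<le> (\<Sum>n\<in>F. (lam n)\<^sup>2 * james_sum (xs n) (P n))"
  proof (intro sum_mono mult_left_mono)
    fix n assume "n \<in> F"
    show "c\<^sup>2 \<le> james_sum (xs n) (P n)"
      using power_mono[OF less_imp_le[OF P_large[OF \<open>n \<in> F\<close>]] \<open>0 \<le> c\<close>, of 2]
      by (simp add: james_sum_def sum_nonneg)
  qed simp
  finally have "c * sqrt (\<Sum>n\<in>F. (lam n)\<^sup>2) \<le> sqrt (james_sum (\<lambda>k. \<Sum>n\<in>F. lam n * xs n k) Q)"
    unfolding glued by (rule real_le_rsqrt)
  also have "\<dots> \<le> james_norm (\<lambda>k. \<Sum>n\<in>F. lam n * xs n k)"
    using F block_finite_supp[OF block]
    by (intro sqrt_james_sum_le_james_norm Q in_James_if_finite_supp finite_supp_lin_comb) auto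
  finally show ?thesis .
qed

lemma interval_sum_block_comb_square_le:
  assumes block: "block_sequence xs" and mean_zero: "\<And>n. I_infty (xs n) = 0" and F: "finite F"
  shows "(\<Sum>k\<in>{a..b}. \<Sum>n\<in>F. lam n * xs n k)\<^sup>2
    \<le> 2 * (\<Sum>n\<in>F. (lam n)\<^sup>2 * (\<Sum>k\<in>{a..b}. xs n k)\<^sup>2)"
proof -
  obtain p q where pq: "{n. (\<Sum>k\<in>{a..b}. xs n k) \<noteq> 0} \<subseteq> {p, q}"
    using nonzero_interval_sums_subset_doubleton[OF block mean_zero] by metis
  have "card {n\<in>F. lam n * (\<Sum>k\<in>{a..b}. xs n k) \<noteq> 0} \<le> card {p, q}"
    using pq by (intro card_mono) auto
  also have "\<dots> \<le> 2"
    by (simp add: card_insert_le_m1)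
  finally have "(\<Sum>n\<in>F. lam n * (\<Sum>k\<in>{a..b}. xs n k))\<^sup>2
      \<le> 2 * (\<Sum>n\<in>F. (lam n * (\<Sum>k\<in>{a..b}. xs n k))\<^sup>2)"
    using sum_square_le_card_nonzero_mult[OF F] by fastforce
  moreover have "(\<Sum>k\<in>{a..b}. \<Sum>n\<in>F. lam n * xs n k) = (\<Sum>n\<in>F. lam n * (\<Sum>k\<in>{a..b}. xs n k))"
    by (simp add: sum.swap[of _ "{a..b}"] sum_distrib_left)
  ultimately show ?thesis
    by (simp add: power_mult_distrib)
qed

lemma james_norm_block_comb_le:
  assumes block: "block_sequence xs" and mean_zero: "\<And>n. I_infty (xs n) = 0"
    and F: "finite F" and "0 \<le> C" and bounded: "\<And>n. n \<in> F \<Longrightarrow> james_norm (xs n) \<le> C"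
  shows "james_norm (\<lambda>k. \<Sum>n\<in>F. lam n * xs n k) \<le> sqrt 2 * C * sqrt (\<Sum>n\<in>F. (lam n)\<^sup>2)"
proof (rule james_norm_leI)
  fix P assume P: "P \<in> interval_families"
  have "james_sum (\<lambda>k. \<Sum>n\<in>F. lam n * xs n k) P
      \<le> (\<Sum>I\<in>P. 2 * (\<Sum>n\<in>F. (lam n)\<^sup>2 * (\<Sum>k\<in>I. xs n k)\<^sup>2))"
    unfolding james_sum_def
    using interval_familiesD(3)[OF P] interval_sum_block_comb_square_le[OF block mean_zero F]
    by (intro sum_mono) fastforce
  also have "\<dots> = 2 * (\<Sum>n\<in>F. (lam n)\<^sup>2 * james_sum (xs n) P)"
    by (simp add: james_sum_def power_mult_distrib sum_distrib_left sum.swap[of _ P])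
  also have "\<dots> \<le> 2 * (\<Sum>n\<in>F. (lam n)\<^sup>2 * C\<^sup>2)"
  proof (rule mult_left_mono[OF sum_mono])
    fix n assume "n \<in> F"
    have "sqrt (james_sum (xs n) P) \<le> C"
      using sqrt_james_sum_le_james_norm[OF in_James_if_finite_supp[OF block_finite_supp[OF block, of n]] P]
        bounded[OF \<open>n \<in> F\<close>]
      by linarith
    then have "james_sum (xs n) P \<le> C\<^sup>2"
      by (rule sqrt_le_D)
    then show "(lam n)\<^sup>2 * james_sum (xs n) P \<le> (lam n)\<^sup>2 * C\<^sup>2"
      by (simp add: mult_left_mono)
  qed simp
  also have "\<dots> = (sqrt 2 * C * sqrt (\<Sum>n\<in>F. (lam n)\<^sup>2))\<^sup>2"
    by (simp add: power_mult_distrib sum_nonneg sum_distrib_left mult_ac)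
  finally show "sqrt (james_sum (\<lambda>k. \<Sum>n\<in>F. lam n * xs n k) P)
      \<le> sqrt 2 * C * sqrt (\<Sum>n\<in>F. (lam n)\<^sup>2)"
    using \<open>0 \<le> C\<close> by (simp add: real_le_lsqrt sum_nonneg)
qed

theorem mainTheorem12:
  fixes xs :: "nat \<Rightarrow> nat \<Rightarrow> real" and \<epsilon> \<alpha> :: real
  assumes "block_sequence xs"
    and "0 < \<epsilon>" and "\<epsilon> < 1" and "\<alpha> > 0"
    and "\<And>n. I_infty (xs n) = 0"
    and "\<And>n. \<bar>james_norm (xs n) - \<alpha>\<bar> < \<alpha> * \<epsilon>"
  shows "\<forall>lam :: nat \<Rightarrow> real. finite {n. lam n \<noteq> 0} \<longrightarrow>
           (1 - \<epsilon>) * \<alpha> * sqrt (\<Sum>n\<in>{n. lam n \<noteq> 0}. (lam n)\<^sup>2)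
             \<le> james_norm (\<lambda>k. \<Sum>n\<in>{n. lam n \<noteq> 0}. lam n * xs n k) \<and>
           james_norm (\<lambda>k. \<Sum>n\<in>{n. lam n \<noteq> 0}. lam n * xs n k)
             \<le> sqrt 2 * (1 + \<epsilon>) * \<alpha> * sqrt (\<Sum>n\<in>{n. lam n \<noteq> 0}. (lam n)\<^sup>2)"
proof (intro allI impI conjI)
  fix lam :: "nat \<Rightarrow> real"
  assume F: "finite {n. lam n \<noteq> 0}"
  have norm_bounds: "(1 - \<epsilon>) * \<alpha> < james_norm (xs n)" "james_norm (xs n) \<le> (1 + \<epsilon>) * \<alpha>" for n
    using assms(6)[of n] by (auto simp: abs_less_iff algebra_simps)
  show "(1 - \<epsilon>) * \<alpha> * sqrt (\<Sum>n\<in>{n. lam n \<noteq> 0}. (lam n)\<^sup>2)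
      \<le> james_norm (\<lambda>k. \<Sum>n\<in>{n. lam n \<noteq> 0}. lam n * xs n k)"
    using assms(3,4) norm_bounds(1) by (intro james_norm_block_comb_ge[OF assms(1) F]) auto
  show "james_norm (\<lambda>k. \<Sum>n\<in>{n. lam n \<noteq> 0}. lam n * xs n k)
      \<le> sqrt 2 * (1 + \<epsilon>) * \<alpha> * sqrt (\<Sum>n\<in>{n. lam n \<noteq> 0}. (lam n)\<^sup>2)"
    using james_norm_block_comb_le[OF assms(1,5) F _ norm_bounds(2)] assms(2,4)
    by (simp add: mult.assoc)
qed

end
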